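(* Let $\mathcal{S}$ be a state space and let $\mathsf{M}^{(1)},\mathsf{M}^{(2)}$ be measurements on $\mathcal{S}$ with $m_1$ and $m_2$ outcomes respectively. If $$\lambda_{max}(\mathsf{H}^{(1,2)})>\frac{\lambda_{max}(\mathcal{S})+m_1m_2}{m_1+m_2},$$ then $\mathsf{M}^{(1)}$ and $\mathsf{M}^{(2)}$ are incompatible.
   Context: General probabilistic theory setting: a state space $\mathcal{S}$ is a compact convex subset of a finite-dimensional real vector space, embedded as a base of a closed generating proper cone in a vector space $V$, with unit effect $u$. Effects are linear functionals $e$ on $V$ with $0\le e\le1$ on $\mathcal{S}$; $\|f\|=\max_{s\in\mathcal{S}}|f(s)|$. A measurement with finite outcome set $\Omega$ is a map $x\mapsto\mathsf{M}_x$ to effects with $\sum_x\mathsf{M}_x=u$; its decoding power is $\lambda_{max}(\mathsf{M})=\sum_x\|\mathsf{M}_x\|$, and $\lambda_{max}(\mathcal{S})$ is the supremum of $\lambda_{max}(\mathsf{M})$ over all measurements on $\mathcal{S}$ with finite outcome sets. $\mathsf{M}^{(1)}$ (outcomes $\Omega_1$) and $\mathsf{M}^{(2)}$ (outcomes $\Omega_2$) are compatible if there is a measurement $\mathsf{J}$ with outcome set $\Omega_1\times\Omega_2$ with $\sum_y\mathsf{J}_{x,y}=\mathsf{M}^{(1)}_x$ and $\sum_x\mathsf{J}_{x,y}=\mathsf{M}^{(2)}_y$, and incompatible otherwise. The harmonic approximate joint measurement $\mathsf{H}^{(1,2)}$ has outcome set $\Omega_1\times\Omega_2$ and effects $\mathsf{H}^{(1,2)}_{x,y}=\frac{1}{m_1+m_2}(\mathsf{M}^{(1)}_x+\mathsf{M}^{(2)}_y)$.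 *)

theory Defs
  imports "HOL-Analysis.Analysis"
begin

text \<open>A state space: a nonempty compact convex subset S of a finite-dimensional real
vector space V (type 'a), which is a base of the cone it generates: there is a linear
unit functional u with u = 1 on S, and S spans V (the cone is generating).
The cone generated by S is then closed and proper automatically.\<close>
definition state_space :: "'a::euclidean_space set \<Rightarrow> ('a \<Rightarrow> real) \<Rightarrow> bool" where
  "state_space S u \<longleftrightarrow> S \<noteq> {} \<and> compact S \<and> convex S \<and> linear u \<and>
     (\<forall>s\<in>S. u s = 1) \<and> span S = UNIV"

definition effect :: "'a::euclidean_space set \<Rightarrow> ('a \<Rightarrow> real) \<Rightarrow> bool" where
  "effect S e \<longleftrightarrow> linear e \<and> (\<forall>s\<in>S. 0 \<le> e s \<and> e s \<le> 1)"

definition fnorm :: "'a::euclidean_space set \<Rightarrow> ('a \<Rightarrow> real) \<Rightarrow> real" where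
  "fnorm S f = (SUP s\<in>S. \<bar>f s\<bar>)"

definition measurement ::
  "'a::euclidean_space set \<Rightarrow> ('a \<Rightarrow> real) \<Rightarrow> 'b set \<Rightarrow> ('b \<Rightarrow> 'a \<Rightarrow> real) \<Rightarrow> bool" where
  "measurement S u \<Omega> M \<longleftrightarrow> finite \<Omega> \<and> (\<forall>x\<in>\<Omega>. effect S (M x)) \<and>
     (\<lambda>v. \<Sum>x\<in>\<Omega>. M x v) = u"

definition decoding_power ::
  "'a::euclidean_space set \<Rightarrow> 'b set \<Rightarrow> ('b \<Rightarrow> 'a \<Rightarrow> real) \<Rightarrow> real" where
  "decoding_power S \<Omega> M = (\<Sum>x\<in>\<Omega>. fnorm S (M x))"

text \<open>Decoding power of the state space: supremum over all measurements with finite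
outcome sets (outcome labels taken from nat, which loses no generality).\<close>
definition decoding_power_space :: "'a::euclidean_space set \<Rightarrow> ('a \<Rightarrow> real) \<Rightarrow> real" where
  "decoding_power_space S u =
     (SUP p\<in>{(\<Omega>::nat set, M). measurement S u \<Omega> M}. decoding_power S (fst p) (snd p))"

definition compatible ::
  "'a::euclidean_space set \<Rightarrow> ('a \<Rightarrow> real) \<Rightarrow> 'b set \<Rightarrow> ('b \<Rightarrow> 'a \<Rightarrow> real)
    \<Rightarrow> 'c set \<Rightarrow> ('c \<Rightarrow> 'a \<Rightarrow> real) \<Rightarrow> bool" where
  "compatible S u \<Omega>1 M1 \<Omega>2 M2 \<longleftrightarrow>
     (\<exists>J. measurement S u (\<Omega>1 \<times> \<Omega>2) J \<and>
          (\<forall>x\<in>\<Omega>1. (\<lambda>v. \<Sum>y\<in>\<Omega>2. J (x, y) v) = M1 x) \<and>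
          (\<forall>y\<in>\<Omega>2. (\<lambda>v. \<Sum>x\<in>\<Omega>1. J (x, y) v) = M2 y))"

definition harmonic ::
  "'b set \<Rightarrow> ('b \<Rightarrow> 'a \<Rightarrow> real) \<Rightarrow> 'c set \<Rightarrow> ('c \<Rightarrow> 'a \<Rightarrow> real) \<Rightarrow> ('b \<times> 'c \<Rightarrow> 'a \<Rightarrow> real)" where
  "harmonic \<Omega>1 M1 \<Omega>2 M2 = (\<lambda>(x, y) v. (M1 x v + M2 y v) / real (card \<Omega>1 + card \<Omega>2))"

end

theory Submission
  imports Defs
begin

text \<open>If J is a joint measurement of M1 and M2, then M1 x + M2 y is the sum of J over the
row x and the column y of the outcome grid; this counts J (x, y) twice and every other outcome
at most once, so M1 x + M2 y \<le> J (x, y) + 1 on states. Summing the norms over all m1 m2 pairs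
(x, y) bounds the decoding power of the harmonic measurement by (\<lambda>(J) + m1 m2) / (m1 + m2),
and \<lambda>(J) \<le> \<lambda>(S).\<close>

lemma sum_row_plus_sum_column_le:
  fixes f :: "'a \<times> 'b \<Rightarrow> 'c::ordered_comm_monoid_add"
  assumes "finite A" "finite B" "x \<in> A" "y \<in> B"
    and nonneg: "\<And>p. p \<in> A \<times> B \<Longrightarrow> 0 \<le> f p"
  shows "(\<Sum>y'\<in>B. f (x, y')) + (\<Sum>x'\<in>A. f (x', y)) \<le> (\<Sum>p\<in>A \<times> B. f p) + f (x, y)"
proof -
  let ?row = "{x} \<times> B" and ?col = "A \<times> {y}"
  have fin: "finite ?row" "finite ?col" using assms(1,2) by auto
  have "(\<Sum>y'\<in>B. f (x, y')) + (\<Sum>x'\<in>A. f (x', y)) = (\<Sum>p\<in>?row. f p) + (\<Sum>p\<in>?col. f p)"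
    using sum.cartesian_product [of "\<lambda>a b. f (a, b)" B "{x}"]
      sum.cartesian_product [of "\<lambda>a b. f (a, b)" "{y}" A]
    by simp
  also have "\<dots> = (\<Sum>p\<in>?row \<union> ?col. f p) + f (x, y)"
    using sum.union_inter [OF fin, of f] assms(3,4) by (simp add: Times_Int_Times)
  also have "(\<Sum>p\<in>?row \<union> ?col. f p) \<le> (\<Sum>p\<in>A \<times> B. f p)"
    using assms by (intro sum_mono2) auto
  finally show ?thesis by (simp add: add_right_mono)
qed

lemma fnorm_le:
  assumes "S \<noteq> {}" "\<And>s. s \<in> S \<Longrightarrow> \<bar>f s\<bar> \<le> c"
  shows "fnorm S f \<le> c"
  unfolding fnorm_def using assms by (rule cSUP_least)

lemma effect_le_fnorm:
  assumes "effect S e" "s \<in> S"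
  shows "e s \<le> fnorm S e"
proof -
  have "bdd_above ((\<lambda>s. \<bar>e s\<bar>) ` S)"
    using assms(1) unfolding effect_def by (intro bdd_aboveI2 [of _ _ 1]) auto
  then have "\<bar>e s\<bar> \<le> fnorm S e"
    unfolding fnorm_def using assms(2) by (rule cSUP_upper2) simp
  then show ?thesis by simp
qed

lemma joint_marginals_le:
  assumes J: "measurement S u (\<Omega>1 \<times> \<Omega>2) J"
    and J1: "\<forall>x\<in>\<Omega>1. (\<lambda>v. \<Sum>y\<in>\<Omega>2. J (x, y) v) = M1 x"
    and J2: "\<forall>y\<in>\<Omega>2. (\<lambda>v. \<Sum>x\<in>\<Omega>1. J (x, y) v) = M2 y"
    and "finite \<Omega>1" "finite \<Omega>2" "x \<in> \<Omega>1" "y \<in> \<Omega>2" "s \<in> S"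
  shows "0 \<le> M1 x s + M2 y s" and "M1 x s + M2 y s \<le> J (x, y) s + u s"
proof -
  have nonneg: "0 \<le> J p s" if "p \<in> \<Omega>1 \<times> \<Omega>2" for p
    using J that \<open>s \<in> S\<close> unfolding measurement_def effect_def by blast
  have M1: "M1 x s = (\<Sum>y'\<in>\<Omega>2. J (x, y') s)" and M2: "M2 y s = (\<Sum>x'\<in>\<Omega>1. J (x', y) s)"
    using J1 J2 \<open>x \<in> \<Omega>1\<close> \<open>y \<in> \<Omega>2\<close> by (metis (no_types, lifting))+
  have "u s = (\<Sum>p\<in>\<Omega>1 \<times> \<Omega>2. J p s)"
    using J unfolding measurement_def by auto
  then show "M1 x s + M2 y s \<le> J (x, y) s + u s"
    unfolding M1 M2 using sum_row_plus_sum_column_le [of _ _ x y "\<lambda>p. J p s"] assms(4-7) nonneg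
    by (simp add: add.commute)
  show "0 \<le> M1 x s + M2 y s"
    unfolding M1 M2 using nonneg assms(6,7) by (simp add: sum_nonneg)
qed

lemma decoding_power_harmonic_le:
  assumes J: "measurement S u (\<Omega>1 \<times> \<Omega>2) J"
    and J1: "\<forall>x\<in>\<Omega>1. (\<lambda>v. \<Sum>y\<in>\<Omega>2. J (x, y) v) = M1 x"
    and J2: "\<forall>y\<in>\<Omega>2. (\<lambda>v. \<Sum>x\<in>\<Omega>1. J (x, y) v) = M2 y"
    and fin: "finite \<Omega>1" "finite \<Omega>2"
    and "S \<noteq> {}" and u: "\<forall>s\<in>S. u s = 1"
  shows "decoding_power S (\<Omega>1 \<times> \<Omega>2) (harmonic \<Omega>1 M1 \<Omega>2 M2)
    \<le> (decoding_power S (\<Omega>1 \<times> \<Omega>2) J + real (card \<Omega>1) * real (card \<Omega>2))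
      / (real (card \<Omega>1) + real (card \<Omega>2))"
proof -
  let ?m = "real (card \<Omega>1) + real (card \<Omega>2)"
  have "fnorm S (harmonic \<Omega>1 M1 \<Omega>2 M2 (x, y)) \<le> (fnorm S (J (x, y)) + 1) / ?m"
    if xy: "x \<in> \<Omega>1" "y \<in> \<Omega>2" for x y
  proof (rule fnorm_le)
    fix s assume s: "s \<in> S"
    note marginals = joint_marginals_le [OF J J1 J2 fin xy s]
    have "\<bar>(M1 x s + M2 y s) / ?m\<bar> = (M1 x s + M2 y s) / ?m"
      using marginals(1) by simp
    also have "\<dots> \<le> (J (x, y) s + 1) / ?m"
      using marginals(2) u s by (simp add: divide_right_mono)
    also have "\<dots> \<le> (fnorm S (J (x, y)) + 1) / ?m"
      using J xy effect_le_fnorm [OF _ s, of "J (x, y)"] unfolding measurement_def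
      by (simp add: divide_right_mono)
    finally show "\<bar>harmonic \<Omega>1 M1 \<Omega>2 M2 (x, y) s\<bar> \<le> (fnorm S (J (x, y)) + 1) / ?m"
      by (simp add: harmonic_def)
  qed fact
  then have "decoding_power S (\<Omega>1 \<times> \<Omega>2) (harmonic \<Omega>1 M1 \<Omega>2 M2)
      \<le> (\<Sum>p\<in>\<Omega>1 \<times> \<Omega>2. (fnorm S (J p) + 1) / ?m)"
    unfolding decoding_power_def by (intro sum_mono) auto
  also have "\<dots> = (decoding_power S (\<Omega>1 \<times> \<Omega>2) J + real (card \<Omega>1) * real (card \<Omega>2)) / ?m"
    unfolding decoding_power_def
    by (simp add: sum_divide_distrib [symmetric] sum.distrib card_cartesian_product)
  finally show ?thesis .
qed

text \<open>The coordinates with respect to a basis B \<subseteq> S are bounded above on the compact set S,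
and effects are nonnegative on B. This makes the supremum defining \<lambda>(S) finite.\<close>

lemma state_space_fnorm_effect_le:
  assumes "state_space S u"
  obtains B and D :: "'a::euclidean_space \<Rightarrow> real"
  where "finite B" "B \<subseteq> S" "\<And>e. effect S e \<Longrightarrow> fnorm S e \<le> (\<Sum>b\<in>B. D b * e b)"
proof -
  have "S \<noteq> {}" "compact S" "span S = UNIV"
    using assms unfolding state_space_def by auto
  obtain B where "B \<subseteq> S" and indep: "independent B" and "S \<subseteq> span B"
    by (rule maximal_independent_subset)
  have span_B: "span B = UNIV"
    using \<open>span S = UNIV\<close> \<open>S \<subseteq> span B\<close> by (metis span_minimal subspace_span top.extremum_uniqueI)
  have "finite B" using indep by (rule finiteI_independent)
  define coord where "coord b v = representation B v b" for b v
  have "linear (coord b)" for b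
    unfolding coord_def by (rule linearI)
      (simp_all add: real_vector.representation_add [OF indep]
        real_vector.representation_scale [OF indep] span_B)
  then have "bounded (coord b ` S)" for b
    using \<open>compact S\<close> by (simp add: compact_imp_bounded bounded_linear_image linear_conv_bounded_linear)
  then have "bdd_above (coord b ` S)" for b
    by (rule bounded_imp_bdd_above)
  define D where "D b = (SUP s\<in>S. coord b s)" for b
  have D: "coord b s \<le> D b" if "s \<in> S" for b s
    unfolding D_def using that \<open>bdd_above (coord b ` S)\<close> by (rule cSUP_upper)
  have expansion: "(\<Sum>b\<in>B. coord b v *\<^sub>R b) = v" for v
    unfolding coord_def using span_B \<open>finite B\<close>
    by (simp add: real_vector.sum_representation_eq [OF indep])
  have "fnorm S e \<le> (\<Sum>b\<in>B. D b * e b)" if "effect S e" for e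
  proof (rule fnorm_le)
    fix s assume "s \<in> S"
    have e: "linear e" "\<And>s. s \<in> S \<Longrightarrow> 0 \<le> e s \<and> e s \<le> 1"
      using that unfolding effect_def by auto
    have "e s = e (\<Sum>b\<in>B. coord b s *\<^sub>R b)"
      by (simp only: expansion)
    also have "\<dots> = (\<Sum>b\<in>B. coord b s * e b)"
      by (simp add: linear_sum [OF e(1)] linear_scale [OF e(1)])
    also have "\<dots> \<le> (\<Sum>b\<in>B. D b * e b)"
      using D \<open>s \<in> S\<close> e(2) \<open>B \<subseteq> S\<close> by (intro sum_mono mult_right_mono) auto
    finally show "\<bar>e s\<bar> \<le> (\<Sum>b\<in>B. D b * e b)"
      using e(2) \<open>s \<in> S\<close> by simp
  qed fact
  with \<open>finite B\<close> \<open>B \<subseteq> S\<close> show ?thesis by (rule that)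
qed

lemma state_space_decoding_power_bounded:
  assumes "state_space S u"
  obtains C where "\<And>\<Omega> M. measurement S u \<Omega> M \<Longrightarrow> decoding_power S \<Omega> M \<le> C"
proof -
  obtain B D where "finite B" "B \<subseteq> S"
    and fnorm_effect: "\<And>e. effect S e \<Longrightarrow> fnorm S e \<le> (\<Sum>b\<in>B. D b * e b)"
    using state_space_fnorm_effect_le [OF assms] by metis
  have "decoding_power S \<Omega> M \<le> (\<Sum>b\<in>B. D b)" if "measurement S u \<Omega> M" for \<Omega> M
  proof -
    have effects: "\<And>x. x \<in> \<Omega> \<Longrightarrow> effect S (M x)" and "(\<lambda>v. \<Sum>x\<in>\<Omega>. M x v) = u"
      using that unfolding measurement_def by auto
    then have sum_M: "(\<Sum>x\<in>\<Omega>. M x v) = u v" for v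
      by (simp add: fun_eq_iff)
    have "decoding_power S \<Omega> M \<le> (\<Sum>x\<in>\<Omega>. \<Sum>b\<in>B. D b * M x b)"
      unfolding decoding_power_def using effects fnorm_effect by (intro sum_mono) blast
    also have "\<dots> = (\<Sum>b\<in>B. \<Sum>x\<in>\<Omega>. D b * M x b)"
      by (rule sum.swap)
    also have "\<dots> = (\<Sum>b\<in>B. D b * u b)"
      by (simp add: sum_distrib_left [symmetric] sum_M)
    also have "\<dots> = (\<Sum>b\<in>B. D b)"
      using assms \<open>B \<subseteq> S\<close> unfolding state_space_def by (intro sum.cong) auto
    finally show ?thesis .
  qed
  then show ?thesis by (rule that)
qed

lemma measurement_reindex:
  assumes h: "bij_betw h A \<Omega>" and M: "measurement S u \<Omega> M"
  shows "measurement S u A (M \<circ> h)"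
  unfolding measurement_def
proof (intro conjI ballI)
  show "finite A"
    using M h unfolding measurement_def by (simp add: bij_betw_finite)
  show "effect S ((M \<circ> h) a)" if "a \<in> A" for a
    using M bij_betw_apply [OF h that] unfolding measurement_def by simp
  show "(\<lambda>v. \<Sum>a\<in>A. (M \<circ> h) a v) = u"
    using M sum.reindex_bij_betw [OF h, of "\<lambda>x. M x _"] unfolding measurement_def by simp
qed

lemma decoding_power_reindex:
  assumes "bij_betw h A \<Omega>"
  shows "decoding_power S A (M \<circ> h) = decoding_power S \<Omega> M"
  unfolding decoding_power_def comp_def by (rule sum.reindex_bij_betw [OF assms])

lemma decoding_power_le_decoding_power_space:
  assumes "state_space S u" "measurement S u \<Omega> M"
  shows "decoding_power S \<Omega> M \<le> decoding_power_space S u"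
proof -
  obtain h :: "nat \<Rightarrow> _" where h: "bij_betw h {0..<card \<Omega>} \<Omega>"
    using assms(2) ex_bij_betw_nat_finite unfolding measurement_def by blast
  obtain C where C: "\<And>(\<Omega>' :: nat set) M'. measurement S u \<Omega>' M' \<Longrightarrow> decoding_power S \<Omega>' M' \<le> C"
    using state_space_decoding_power_bounded [OF assms(1)] by blast
  have "bdd_above ((\<lambda>p. decoding_power S (fst p) (snd p))
    ` {(\<Omega>' :: nat set, M'). measurement S u \<Omega>' M'})"
    using C by (intro bdd_aboveI2 [of _ _ C]) auto
  moreover have "({0..<card \<Omega>}, M \<circ> h) \<in> {(\<Omega>', M'). measurement S u \<Omega>' M'}"
    using measurement_reindex [OF h assms(2)] by simp
  ultimately have "decoding_power S {0..<card \<Omega>} (M \<circ> h) \<le> decoding_power_space S u"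
    unfolding decoding_power_space_def by (metis (no_types, lifting) cSUP_upper fst_conv snd_conv)
  then show ?thesis
    by (simp only: decoding_power_reindex [OF h])
qed

theorem corollary1:
  fixes S :: "'a::euclidean_space set" and u :: "'a \<Rightarrow> real"
    and \<Omega>1 :: "'b set" and M1 :: "'b \<Rightarrow> 'a \<Rightarrow> real"
    and \<Omega>2 :: "'c set" and M2 :: "'c \<Rightarrow> 'a \<Rightarrow> real"
  assumes "state_space S u"
    and "measurement S u \<Omega>1 M1"
    and "measurement S u \<Omega>2 M2"
    and "decoding_power S (\<Omega>1 \<times> \<Omega>2) (harmonic \<Omega>1 M1 \<Omega>2 M2)
           > (decoding_power_space S u + real (card \<Omega>1) * real (card \<Omega>2))
             / (real (card \<Omega>1) + real (card \<Omega>2))"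
  shows "\<not> compatible S u \<Omega>1 M1 \<Omega>2 M2"
proof
  assume "compatible S u \<Omega>1 M1 \<Omega>2 M2"
  then obtain J where J: "measurement S u (\<Omega>1 \<times> \<Omega>2) J"
    and J1: "\<forall>x\<in>\<Omega>1. (\<lambda>v. \<Sum>y\<in>\<Omega>2. J (x, y) v) = M1 x"
    and J2: "\<forall>y\<in>\<Omega>2. (\<lambda>v. \<Sum>x\<in>\<Omega>1. J (x, y) v) = M2 y"
    unfolding compatible_def by blast
  have "S \<noteq> {}" "\<forall>s\<in>S. u s = 1"
    using assms(1) unfolding state_space_def by auto
  moreover have "finite \<Omega>1" "finite \<Omega>2"
    using assms(2,3) unfolding measurement_def by auto
  ultimately have "decoding_power S (\<Omega>1 \<times> \<Omega>2) (harmonic \<Omega>1 M1 \<Omega>2 M2)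
      \<le> (decoding_power S (\<Omega>1 \<times> \<Omega>2) J + real (card \<Omega>1) * real (card \<Omega>2))
        / (real (card \<Omega>1) + real (card \<Omega>2))"
    using decoding_power_harmonic_le [OF J J1 J2] by blast
  also have "\<dots> \<le> (decoding_power_space S u + real (card \<Omega>1) * real (card \<Omega>2))
      / (real (card \<Omega>1) + real (card \<Omega>2))"
    using decoding_power_le_decoding_power_space [OF assms(1) J] by (simp add: divide_right_mono)
  finally show False
    using assms(4) by linarith
qed

end
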